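(* Let $\{s_n\}$, $\{t_n\}$ be sequences of positive reals with $s_n\ge t_n\ge2$ and $s_{n+1}\ge s_n+t_n$ for all $n\ge1$. For $n\ge1$ let $\mathcal{D}_n$ be the set of $(\sigma_1,\dots,\sigma_n)\in\mathbb{N}^n$ with $s_k<\sigma_k\le s_k+t_k$ for all $1\le k\le n$, and for $(\sigma_1,\dots,\sigma_n)\in\mathcal{D}_n$ let \[ J_n(\sigma_1,\dots,\sigma_n):=\bigcup_{j\in\mathbb{N},\ s_{n+1}<j\le s_{n+1}+t_{n+1}} \overline{I_{n+1}(\sigma_1,\dots,\sigma_n,j)}. \] Then for any two distinct $(\sigma_1,\dots,\sigma_n),(\sigma'_1,\dots,\sigma'_n)\in\mathcal{D}_n$, the intervals $J_n(\sigma_1,\dots,\sigma_n)$ and $J_n(\sigma'_1,\dots,\sigma'_n)$ are disjoint and separated by a gap of length at least \[ \varepsilon_n:=\frac{1}{2^{n+3}}\cdot\frac{1}{s_1\cdots s_n\, s_n}. \]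
   Context: Engel expansion: define $T:[0,1)\to[0,1)$ by $T(0)=0$ and $T(x)=x\lceil 1/x\rceil-1$ for $x\in(0,1)$. For irrational $x\in(0,1)$ set $d_1(x)=\lceil 1/x\rceil$ and $d_{n+1}(x)=d_1(T^n(x))$. For integers $2\le\sigma_1\le\cdots\le\sigma_m$, the cylinder $I_m(\sigma_1,\dots,\sigma_m)$ is the set of $x\in(0,1)$ with $d_k(x)=\sigma_k$ for $1\le k\le m$; it is the interval $[A_m,B_m)$ with $A_m=\sum_{k=1}^{m}\frac{1}{\sigma_1\cdots\sigma_k}$ and $B_m=\sum_{k=1}^{m-1}\frac{1}{\sigma_1\cdots\sigma_k}+\frac{1}{\sigma_1\cdots\sigma_{m-1}(\sigma_m-1)}$, of length $\frac{1}{\sigma_1\cdots\sigma_m(\sigma_m-1)}$. $\overline{A}$ denotes closure. *)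

theory Defs
  imports "HOL-Analysis.Analysis"
begin

definition engel_T :: "real \<Rightarrow> real" where
  "engel_T x = (if x = 0 then 0 else x * of_int \<lceil>1 / x\<rceil> - 1)"

text \<open>Engel digits, indexed from 1: d_1 x = ceiling(1/x), d_(n+1) x = d_1 (T^n x).\<close>
definition engel_digit :: "nat \<Rightarrow> real \<Rightarrow> int" where
  "engel_digit n x = \<lceil>1 / ((engel_T ^^ (n - 1)) x)\<rceil>"

text \<open>Cylinder I_m(sigma_1,...,sigma_m), the digit list given as a list of length m
  (list position k-1 holds sigma_k).\<close>
definition engel_cyl :: "nat list \<Rightarrow> real set" where
  "engel_cyl \<sigma>s = {x. 0 < x \<and> x < 1 \<and>
      (\<forall>k<length \<sigma>s. engel_digit (Suc k) x = int (\<sigma>s ! k))}"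

definition D_set :: "(nat \<Rightarrow> real) \<Rightarrow> (nat \<Rightarrow> real) \<Rightarrow> nat \<Rightarrow> nat list set" where
  "D_set s t n = {\<sigma>s. length \<sigma>s = n \<and>
      (\<forall>k\<in>{1..n}. s k < real (\<sigma>s ! (k - 1)) \<and> real (\<sigma>s ! (k - 1)) \<le> s k + t k)}"

definition J_set :: "(nat \<Rightarrow> real) \<Rightarrow> (nat \<Rightarrow> real) \<Rightarrow> nat \<Rightarrow> nat list \<Rightarrow> real set" where
  "J_set s t n \<sigma>s = (\<Union>j\<in>{j::nat. s (n + 1) < real j \<and> real j \<le> s (n + 1) + t (n + 1)}.
      closure (engel_cyl (\<sigma>s @ [j])))"

definition eps_gap :: "(nat \<Rightarrow> real) \<Rightarrow> nat \<Rightarrow> real" where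
  "eps_gap s n = 1 / 2 ^ (n + 3) * (1 / ((\<Prod>k=1..n. s k) * s n))"

end

theory Submission
  imports Defs
begin

(* A point x whose first m Engel digits are sigma_1, ..., sigma_m satisfies
   x = (1 + (1 + ... (1 + T^m x) / sigma_m ...) / sigma_2) / sigma_1,  and T^m x lies between
   1/sigma_(m+1) and 1/(sigma_(m+1) - 1).  Hence J_n(sigma) is squeezed between two explicit values
   of this nested expression.  For two distinct tuples with common prefix p and first differing
   digits a < b, the difference of those bounds is the difference of the tails divided by the
   product of the digits of p, which is at most 2^|p| s_1 ... s_|p|.  The tails differ by at least
   about 1/a^3, because a and b lie in the same window (s_k, s_k + t_k] and all later digits of the
   larger tuple exceed a + 1; when the differing digit is the last one, the sharper bound of order
   1/a^2 comes from the gap between the windows of consecutive positions. *)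

fun engel_value :: "nat list \<Rightarrow> real \<Rightarrow> real" where
  "engel_value [] c = c"
| "engel_value (a # l) c = (1 + engel_value l c) / real a"

lemma engel_value_affine: "engel_value l c = engel_value l 0 + c / (\<Prod>x\<leftarrow>l. real x)"
  by (induction l) (auto simp: add_divide_distrib divide_divide_eq_left mult.commute)

lemma engel_value_append: "engel_value (p @ l) c = engel_value p (engel_value l c)"
  by (induction p) auto

lemma engel_value_common_prefix_diff:
  "engel_value (p @ l) c - engel_value (p @ l') c' =
     (engel_value l c - engel_value l' c') / (\<Prod>x\<leftarrow>p. real x)"
  unfolding engel_value_append engel_value_affine[of p "engel_value l c"]
    engel_value_affine[of p "engel_value l' c'"]
  by (simp add: diff_divide_distrib)

lemma digit_prod_pos: "\<forall>e\<in>set l. 1 \<le> e \<Longrightarrow> 0 < (\<Prod>x\<leftarrow>l. real x)"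
  by (induction l) auto

lemma engel_value_mono:
  assumes "\<forall>e\<in>set l. 1 \<le> e" "c \<le> c'"
  shows "engel_value l c \<le> engel_value l c'"
  using assms(1) by (induction l) (auto intro: divide_right_mono simp: assms(2))

lemma engel_value_nonneg: "\<forall>e\<in>set l. 1 \<le> e \<Longrightarrow> 0 \<le> c \<Longrightarrow> 0 \<le> engel_value l c"
  by (induction l) auto

lemma engel_value_le_geometric:
  assumes "2 \<le> d" "\<forall>e\<in>set l. d \<le> real e" "0 \<le> c" "c \<le> 1 / (d - 1)"
  shows "engel_value l c \<le> 1 / (d - 1)"
  using assms(2)
proof (induction l)
  case Nil
  then show ?case using assms by simp
next
  case (Cons e l)
  then have IH: "engel_value l c \<le> 1 / (d - 1)" and e: "d \<le> real e" by auto
  have "(1 + engel_value l c) / real e \<le> (1 + 1 / (d - 1)) / real e"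
    using IH e assms(1) by (intro divide_right_mono) auto
  also have "\<dots> \<le> (1 + 1 / (d - 1)) / d"
    using e assms(1) by (intro divide_left_mono) (auto simp: field_simps)
  also have "\<dots> = 1 / (d - 1)"
    using assms(1) by (simp add: field_simps)
  finally show ?case by simp
qed

lemma ceiling_inverse_eq_bounds:
  assumes "\<lceil>1 / x\<rceil> = int a" "2 \<le> a"
  shows "0 < x" "1 / real a \<le> x" "x \<le> 1 / (real a - 1)"
proof -
  have h: "real a - 1 < 1 / x" "1 / x \<le> real a"
    using ceiling_correct[of "1 / x"] assms(1) by simp_all
  have a1: "1 \<le> real a - 1" using assms(2) by simp
  then show x: "0 < x" using h by (smt (verit) zero_less_divide_1_iff)
  from h(2) x show "1 / real a \<le> x" using assms(2) by (simp add: field_simps)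
  from h(1) x a1 show "x \<le> 1 / (real a - 1)" by (simp add: field_simps)
qed

lemma engel_value_bounds_of_digits:
  assumes "\<forall>e\<in>set \<sigma>s. 2 \<le> e" "2 \<le> j"
    and "\<forall>i<Suc (length \<sigma>s). \<lceil>1 / (engel_T ^^ i) x\<rceil> = int ((\<sigma>s @ [j]) ! i)"
  shows "engel_value \<sigma>s (1 / real j) \<le> x \<and> x \<le> engel_value \<sigma>s (1 / (real j - 1))"
  using assms
proof (induction \<sigma>s arbitrary: x)
  case Nil
  then have "\<lceil>1 / x\<rceil> = int j" by (metis funpow_0 nth_Cons_0 append_Nil zero_less_Suc)
  from ceiling_inverse_eq_bounds[OF this Nil(2)] show ?case by simp
next
  case (Cons a \<sigma>s)
  have a: "\<lceil>1 / x\<rceil> = int a"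
    using Cons.prems(3) by (metis funpow_0 nth_Cons_0 append_Cons zero_less_Suc)
  have a2: "2 \<le> a" using Cons.prems(1) by simp
  have x: "0 < x" using ceiling_inverse_eq_bounds(1)[OF a a2] .
  have Tx: "engel_T x = x * real a - 1" using x a unfolding engel_T_def by simp
  have "\<forall>i<Suc (length \<sigma>s). \<lceil>1 / (engel_T ^^ i) (engel_T x)\<rceil> = int ((\<sigma>s @ [j]) ! i)"
  proof (intro allI impI)
    fix i assume "i < Suc (length \<sigma>s)"
    then have "\<lceil>1 / (engel_T ^^ Suc i) x\<rceil> = int (((a # \<sigma>s) @ [j]) ! Suc i)"
      using Cons.prems(3) by (metis Suc_less_eq length_Cons length_append_singleton)
    then show "\<lceil>1 / (engel_T ^^ i) (engel_T x)\<rceil> = int ((\<sigma>s @ [j]) ! i)"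
      by (simp only: funpow_Suc_right o_apply) simp
  qed
  then have "engel_value \<sigma>s (1 / real j) \<le> engel_T x"
    and "engel_T x \<le> engel_value \<sigma>s (1 / (real j - 1))"
    using Cons by auto
  then have "(1 + engel_value \<sigma>s (1 / real j)) / real a \<le> (1 + engel_T x) / real a"
    "(1 + engel_T x) / real a \<le> (1 + engel_value \<sigma>s (1 / (real j - 1))) / real a"
    by (simp_all add: divide_right_mono)
  moreover have "x = (1 + engel_T x) / real a" using Tx a2 by (simp add: field_simps)
  ultimately show ?case by simp
qed

lemma closure_engel_cyl_subset:
  assumes "\<forall>e\<in>set \<sigma>s. 2 \<le> e" "2 \<le> j"
  shows "closure (engel_cyl (\<sigma>s @ [j])) \<subseteq>
           {engel_value \<sigma>s (1 / real j) .. engel_value \<sigma>s (1 / (real j - 1))}"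
proof (rule closure_minimal)
  show "engel_cyl (\<sigma>s @ [j]) \<subseteq> {engel_value \<sigma>s (1 / real j) .. engel_value \<sigma>s (1 / (real j - 1))}"
  proof
    fix x assume "x \<in> engel_cyl (\<sigma>s @ [j])"
    then have "\<forall>i<Suc (length \<sigma>s). \<lceil>1 / (engel_T ^^ i) x\<rceil> = int ((\<sigma>s @ [j]) ! i)"
      unfolding engel_cyl_def engel_digit_def by auto
    from engel_value_bounds_of_digits[OF assms this]
    show "x \<in> {engel_value \<sigma>s (1 / real j) .. engel_value \<sigma>s (1 / (real j - 1))}" by simp
  qed
qed simp

lemma last_digit_gap:
  fixes a b j :: nat and M :: real
  assumes "1 \<le> a" "a < b" "b < j" "0 < M" "M < 2 * real j"
  shows "1 / (4 * (real a * (real a + 1))) \<le> (1 + 1 / M) / real a - (1 + 1 / (real j - 1)) / real b"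
proof -
  define c where "c = 1 / (real j - 1)"
  have a0: "0 < real a" using assms(1) by simp
  have ja: "real a + 1 \<le> real j - 1" using assms(2,3) by linarith
  have c0: "0 < c" using ja a0 unfolding c_def by simp
  have ac: "real a * c \<le> 1" using ja a0 unfolding c_def by (simp add: field_simps)
  define N where "N = 1 + (real a + 1) / M - real a * c"
  have N: "1 / 4 \<le> N"
  proof (cases "2 * real a \<le> real j - 1")
    case True
    then have "real a * c \<le> 1 / 2" unfolding c_def using a0 by (simp add: field_simps)
    moreover have "0 \<le> (real a + 1) / M" using assms(4) by simp
    ultimately show ?thesis unfolding N_def by linarith
  next
    case False
    then have "M < 4 * real a + 4" using assms(5) by linarith
    then have "1 / 4 < (real a + 1) / M" using assms(4) by (simp add: field_simps)
    then show ?thesis unfolding N_def using ac by linarith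
  qed
  have "1 / (4 * (real a * (real a + 1))) \<le> N / (real a * (real a + 1))"
    using divide_right_mono[OF N, of "real a * (real a + 1)"] a0 by simp
  also have "\<dots> = (1 + 1 / M) / real a - (1 + c) / (real a + 1)"
    unfolding N_def using a0 assms(4) by (simp add: field_simps)
  also have "\<dots> \<le> (1 + 1 / M) / real a - (1 + c) / real b"
    using c0 assms(2) a0 by (simp add: divide_left_mono)
  finally show ?thesis unfolding c_def .
qed

lemma inner_digit_gap:
  fixes a b :: nat and u v :: real
  assumes "1 \<le> a" "a < b" "0 \<le> u" "0 \<le> v" "v \<le> 1 / (real a + 1)"
  shows "1 / (real a * (real a + 1) * (real a + 1)) \<le> (1 + u) / real a - (1 + v) / real b"
proof -
  have a0: "0 < real a" using assms(1) by simp
  have "1 / real a \<le> (1 + u) / real a"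
    using a0 assms(3) by (simp add: divide_right_mono)
  moreover have "(1 + v) / real b \<le> (1 + 1 / (real a + 1)) / real b"
    using assms(5) by (simp add: divide_right_mono)
  moreover have "\<dots> \<le> (1 + 1 / (real a + 1)) / (real a + 1)"
    using assms(2) a0 by (intro divide_left_mono) (auto simp: add_pos_pos)
  moreover have "1 / real a - (1 + 1 / (real a + 1)) / (real a + 1) =
      1 / (real a * (real a + 1) * (real a + 1))"
    using a0 by (simp add: divide_simps) (simp add: algebra_simps)
  ultimately show ?thesis by linarith
qed

lemma list_first_difference:
  "length xs = length ys \<Longrightarrow> xs \<noteq> ys \<Longrightarrow>
   \<exists>p a b r r'. xs = p @ a # r \<and> ys = p @ b # r' \<and> length r' = length r \<and> a \<noteq> b"
proof (induction xs arbitrary: ys)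
  case Nil
  then show ?case by simp
next
  case (Cons x xs)
  then obtain y ys' where ys: "ys = y # ys'" by (cases ys) auto
  show ?case
  proof (cases "x = y")
    case True
    then have "length xs = length ys'" "xs \<noteq> ys'" using Cons.prems ys by auto
    then obtain p a b r r' where "xs = p @ a # r" "ys' = p @ b # r'" "length r' = length r" "a \<noteq> b"
      using Cons.IH by blast
    then show ?thesis using ys True by (intro exI[of _ "x # p"]) auto
  next
    case False
    then show ?thesis using ys Cons.prems by (intro exI[of _ "[]"]) auto
  qed
qed

lemma D_set_length: "\<sigma>s \<in> D_set s t n \<Longrightarrow> length \<sigma>s = n"
  unfolding D_set_def by simp

lemma D_set_nth:
  assumes "\<sigma>s \<in> D_set s t n" "k < n"
  shows "s (Suc k) < real (\<sigma>s ! k) \<and> real (\<sigma>s ! k) \<le> s (Suc k) + t (Suc k)"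
  using assms unfolding D_set_def by (auto dest!: bspec[of _ _ "Suc k"])

context
  fixes s t :: "nat \<Rightarrow> real"
  assumes pos: "\<And>k. 1 \<le> k \<Longrightarrow> 0 < s k \<and> 0 < t k"
    and window: "\<And>k. 1 \<le> k \<Longrightarrow> t k \<le> s k \<and> 2 \<le> t k"
    and growth: "\<And>k. 1 \<le> k \<Longrightarrow> s k + t k \<le> s (k + 1)"
begin

lemma s_mono:
  assumes "1 \<le> k" "k \<le> l"
  shows "s k \<le> s l"
  using assms(2)
proof (induction l rule: dec_induct)
  case (step l)
  then show ?case using growth[of l] window[of l] assms(1) by simp
qed simp

lemma last_branch_gap:
  assumes "1 \<le> n" "s n < real a" "a < b" "real b \<le> s n + t n"
    and "s (n + 1) < real j"
  shows "1 / (16 * s n * s n) \<le>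
           (1 + 1 / (s (n + 1) + t (n + 1))) / real a - (1 + 1 / (real j - 1)) / real b"
proof -
  have "1 / (16 * s n * s n) \<le> 1 / (4 * (real a * (real a + 1)))"
  proof (rule frac_le)
    have "real a \<le> 2 * s n" "real a + 1 \<le> 2 * s n"
      using assms(2-4) window[OF assms(1)] by linarith+
    then show "4 * (real a * (real a + 1)) \<le> 16 * s n * s n"
      using assms(2) window[OF assms(1)] mult_mono[of "real a" "2 * s n" "real a + 1" "2 * s n"]
      by linarith
  qed (use assms(2) window[OF assms(1)] in auto)
  also have "\<dots> \<le> (1 + 1 / (s (n + 1) + t (n + 1))) / real a - (1 + 1 / (real j - 1)) / real b"
  proof (rule last_digit_gap)
    show "1 \<le> a" using assms(2) window[OF assms(1)] by linarith
    show "b < j" using assms(4,5) growth[OF assms(1)] by simp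
    show "0 < s (n + 1) + t (n + 1)" using pos[of "n + 1"] by simp
    show "s (n + 1) + t (n + 1) < 2 * real j" using assms(5) window[of "n + 1"] by simp
  qed (use assms(3) in simp)
  finally show ?thesis .
qed

lemma inner_branch_gap:
  assumes "1 \<le> k" "k < n" "s k < real a" "a < b" "real b \<le> s k + t k"
    and "\<forall>e\<in>set r. 1 \<le> e" "\<forall>e\<in>set r'. s (k + 1) < real e"
    and "0 < M" "s (n + 1) < real j"
  shows "1 / (16 * s k * s (k + 1) * s n) \<le>
           engel_value (a # r) (1 / M) - engel_value (b # r') (1 / (real j - 1))"
proof -
  have a1: "1 \<le> a" using assms(3) window[OF assms(1)] by linarith
  have b: "real b \<le> s (k + 1)" using assms(5) growth[OF assms(1)] by simp
  have "s (k + 1) \<le> s (n + 1)" using assms(1,2) by (intro s_mono) auto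
  then have "b < j" using assms(9) b by simp
  then have ja: "real a + 1 \<le> real j - 1" using assms(4) by simp
  define v where "v = engel_value r' (1 / (real j - 1))"
  have r'_large: "\<forall>e\<in>set r'. a + 2 \<le> e"
  proof
    fix e assume "e \<in> set r'"
    then have "b < e" using assms(7) b by fastforce
    then show "a + 2 \<le> e" using assms(4) by simp
  qed
  have v: "0 \<le> v \<and> v \<le> 1 / (real a + 1)"
  proof
    have "\<forall>e\<in>set r'. real a + 2 \<le> real e" using r'_large by fastforce
    moreover have "1 / (real j - 1) \<le> 1 / (real a + 2 - 1)" using ja a1 by (simp add: frac_le)
    ultimately show "v \<le> 1 / (real a + 1)"
      using engel_value_le_geometric[of "real a + 2" r' "1 / (real j - 1)"] ja
      unfolding v_def by (simp add: add.commute)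
    have "\<forall>e\<in>set r'. 1 \<le> e" using r'_large by fastforce
    then show "0 \<le> v" unfolding v_def using ja by (intro engel_value_nonneg) auto
  qed
  have "1 / (16 * s k * s (k + 1) * s n) \<le> 1 / (real a * (real a + 1) * (real a + 1))"
  proof (rule frac_le)
    have "real a \<le> 2 * s k" using assms(3-5) window[OF assms(1)] by linarith
    moreover have "real a + 1 \<le> 2 * s (k + 1)" using assms(4) b window[of "k + 1"] by linarith
    moreover have "real a + 1 \<le> s n" using assms(4) b s_mono[of "k + 1" n] assms(2) by linarith
    ultimately have "real a * (real a + 1) * (real a + 1) \<le> 4 * (s k * s (k + 1) * s n)"
      using a1 mult_mono[of "real a" "2 * s k" "real a + 1" "2 * s (k + 1)"]
        mult_mono[of "real a * (real a + 1)" "2 * s k * (2 * s (k + 1))" "real a + 1" "s n"]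
      by (simp add: mult.assoc)
    moreover have "0 < s k * s (k + 1) * s n"
      using pos[OF assms(1)] pos[of "k + 1"] pos[of n] assms(1,2) by simp
    ultimately show "real a * (real a + 1) * (real a + 1) \<le> 16 * s k * s (k + 1) * s n"
      by linarith
  qed (use a1 in auto)
  also have "\<dots> \<le> (1 + engel_value r (1 / M)) / real a - (1 + v) / real b"
    using inner_digit_gap[OF a1 assms(4) _ v[THEN conjunct1] v[THEN conjunct2]]
      engel_value_nonneg[OF assms(6)] assms(8) by simp
  finally show ?thesis unfolding v_def by simp
qed

lemma D_set_digits_ge_2:
  assumes "\<sigma>s \<in> D_set s t n"
  shows "\<forall>e\<in>set \<sigma>s. 2 \<le> e"
proof
  fix e assume "e \<in> set \<sigma>s"
  then obtain k where "k < n" "\<sigma>s ! k = e"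
    using D_set_length[OF assms] by (auto simp: in_set_conv_nth)
  then show "2 \<le> e" using D_set_nth[OF assms, of k] window[of "Suc k"] by simp
qed

lemma J_set_bounds:
  assumes "\<sigma>s \<in> D_set s t n" "x \<in> J_set s t n \<sigma>s"
  obtains j :: nat where "s (n + 1) < real j" "real j \<le> s (n + 1) + t (n + 1)"
    "engel_value \<sigma>s (1 / (s (n + 1) + t (n + 1))) \<le> x" "x \<le> engel_value \<sigma>s (1 / (real j - 1))"
proof -
  from assms(2) obtain j :: nat where j: "s (n + 1) < real j" "real j \<le> s (n + 1) + t (n + 1)"
    and x: "x \<in> closure (engel_cyl (\<sigma>s @ [j]))"
    unfolding J_set_def by auto
  have ge2: "\<forall>e\<in>set \<sigma>s. 2 \<le> e" using D_set_digits_ge_2[OF assms(1)] .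
  have "2 < real j" using j(1) window[of "n + 1"] by linarith
  then have x_bounds: "engel_value \<sigma>s (1 / real j) \<le> x" "x \<le> engel_value \<sigma>s (1 / (real j - 1))"
    using closure_engel_cyl_subset[OF ge2, of j] x by auto
  have "1 / (s (n + 1) + t (n + 1)) \<le> 1 / real j"
    using j window[of "n + 1"] by (intro frac_le) auto
  then have "engel_value \<sigma>s (1 / (s (n + 1) + t (n + 1))) \<le> engel_value \<sigma>s (1 / real j)"
    using ge2 by (intro engel_value_mono) auto
  then show thesis using that j x_bounds by simp
qed

lemma s_mult_s_Suc_le_prod:
  assumes "1 \<le> k" "k < n"
  shows "s k * s (k + 1) \<le> (\<Prod>i = k..n. s i)"
proof -
  have "(\<Prod>i = k..n. s i) = s k * (s (k + 1) * (\<Prod>i = k + 2..n. s i))"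
    using assms by (simp add: prod.atLeast_Suc_atMost)
  moreover have "1 \<le> (\<Prod>i = k + 2..n. s i)"
  proof (intro prod_ge_1)
    fix i assume "i \<in> {k + 2..n}"
    then show "1 \<le> s i" using window[of i] by simp
  qed
  ultimately show ?thesis
    using pos[OF assms(1)] pos[of "k + 1"] by (simp add: mult_le_cancel_left1)
qed

lemma tail_gap:
  assumes \<sigma>s: "p @ a # r \<in> D_set s t n" and \<sigma>s': "p @ b # r' \<in> D_set s t n" and "a < b"
    and j: "s (n + 1) < real j"
  shows "1 / (16 * (\<Prod>i = Suc (length p)..n. s i) * s n) \<le>
           engel_value (a # r) (1 / (s (n + 1) + t (n + 1))) - engel_value (b # r') (1 / (real j - 1))"
proof -
  define k where "k = Suc (length p)"
  have n: "n = k + length r" and r': "length r' = length r"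
    using D_set_length[OF \<sigma>s] D_set_length[OF \<sigma>s'] unfolding k_def by simp_all
  have a: "s k < real a" and b: "real b \<le> s k + t k"
    using D_set_nth[OF \<sigma>s, of "length p"] D_set_nth[OF \<sigma>s', of "length p"] n
    unfolding k_def by (auto simp: nth_append)
  have M: "0 < s (n + 1) + t (n + 1)" using pos[of "n + 1"] by simp
  show ?thesis
  proof (cases "r = []")
    case True
    then have "r' = []" "n = k" using r' n by auto
    then show ?thesis
      using last_branch_gap[of n a b j] True \<open>a < b\<close> a b j unfolding k_def by simp
  next
    case False
    then have kn: "k < n" using n by simp
    have "\<forall>e\<in>set r. 2 \<le> e" using D_set_digits_ge_2[OF \<sigma>s] by simp
    then have "\<forall>e\<in>set r. 1 \<le> e" by auto
    moreover have "\<forall>e\<in>set r'. s (k + 1) < real e"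
    proof
      fix e assume "e \<in> set r'"
      then obtain i where i: "i < length r'" "r' ! i = e" by (auto simp: in_set_conv_nth)
      then have "s (Suc (length p + Suc i)) < real e"
        using D_set_nth[OF \<sigma>s', of "length p + Suc i"] n r'
        unfolding k_def by (simp add: nth_append)
      moreover have "s (k + 1) \<le> s (Suc (length p + Suc i))"
        unfolding k_def by (intro s_mono) auto
      ultimately show "s (k + 1) < real e" by simp
    qed
    ultimately have gap: "1 / (16 * s k * s (k + 1) * s n) \<le>
        engel_value (a # r) (1 / (s (n + 1) + t (n + 1))) - engel_value (b # r') (1 / (real j - 1))"
      using inner_branch_gap[of k n a b r r'] kn a b \<open>a < b\<close> M j unfolding k_def by simp
    have "s k * s (k + 1) \<le> (\<Prod>i = k..n. s i)"
      using s_mult_s_Suc_le_prod[OF _ kn] unfolding k_def by simp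
    then have "1 / (16 * (\<Prod>i = k..n. s i) * s n) \<le> 1 / (16 * s k * s (k + 1) * s n)"
      using pos[of k] pos[of "k + 1"] pos[of n] kn unfolding k_def
      by (intro frac_le) (auto intro!: mult_pos_pos simp: mult.assoc)
    then show ?thesis using gap unfolding k_def by simp
  qed
qed

lemma D_set_prefix_prod_le:
  assumes "p @ q \<in> D_set s t n"
  shows "(\<Prod>x\<leftarrow>p. real x) \<le> 2 ^ length p * (\<Prod>k = 1..length p. s k)"
proof -
  have "(\<Prod>x\<leftarrow>p. real x) = (\<Prod>i<length p. real (p ! i))"
    by (simp add: prod.list_conv_set_nth atLeast0LessThan)
  also have "\<dots> \<le> (\<Prod>i<length p. 2 * s (Suc i))"
  proof (rule prod_mono)
    fix i assume "i \<in> {..<length p}"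
    then have "real (p ! i) \<le> s (Suc i) + t (Suc i)"
      using D_set_nth[OF assms, of i] D_set_length[OF assms] by (auto simp: nth_append)
    then show "0 \<le> real (p ! i) \<and> real (p ! i) \<le> 2 * s (Suc i)"
      using window[of "Suc i"] by simp
  qed
  also have "\<dots> = 2 ^ length p * (\<Prod>k = 1..length p. s k)"
    by (simp add: prod.distrib prod.atLeast1_atMost_eq)
  finally show ?thesis .
qed

lemma J_set_gap_of_first_difference:
  assumes \<sigma>s: "p @ a # r \<in> D_set s t n" and \<sigma>s': "p @ b # r' \<in> D_set s t n" and "a < b"
    and x: "x \<in> J_set s t n (p @ a # r)" and y: "y \<in> J_set s t n (p @ b # r')"
  shows "eps_gap s n \<le> x - y"
proof -
  define m where "m = length p"
  define M where "M = s (n + 1) + t (n + 1)"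
  define R where "R = (\<Prod>k = 1..m. s k)"
  define Q where "Q = (\<Prod>k = Suc m..n. s k)"
  have mn: "m < n" using D_set_length[OF \<sigma>s] unfolding m_def by simp
  have x_lo: "engel_value (p @ a # r) (1 / M) \<le> x"
    using J_set_bounds[OF \<sigma>s x] unfolding M_def by metis
  obtain j :: nat where j: "s (n + 1) < real j" "y \<le> engel_value (p @ b # r') (1 / (real j - 1))"
    using J_set_bounds[OF \<sigma>s' y] by metis
  have R: "0 < R" and Q: "0 < Q" and sn: "0 < s n"
    unfolding R_def Q_def using pos mn by (auto intro!: prod_pos)
  have P: "0 < (\<Prod>x\<leftarrow>p. real x)"
    using D_set_digits_ge_2[OF \<sigma>s] by (intro digit_prod_pos) (auto simp: ball_Un)
  define \<delta> where "\<delta> = engel_value (a # r) (1 / M) - engel_value (b # r') (1 / (real j - 1))"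
  have tail: "1 / (16 * Q * s n) \<le> \<delta>"
    using tail_gap[OF \<sigma>s \<sigma>s' \<open>a < b\<close> j(1)] unfolding \<delta>_def Q_def M_def m_def .
  moreover have "0 \<le> 1 / (16 * Q * s n)" using Q sn by simp
  ultimately have "0 \<le> \<delta>" by linarith
  moreover have prefix: "(\<Prod>x\<leftarrow>p. real x) \<le> 2 ^ m * R"
    using D_set_prefix_prod_le[OF \<sigma>s] unfolding m_def R_def .
  ultimately have tail_scaled: "(1 / (16 * Q * s n)) / (2 ^ m * R) \<le> \<delta> / (\<Prod>x\<leftarrow>p. real x)"
    using tail P by (intro frac_le)
  have "(\<Prod>k = 1..n. s k) = R * Q"
    using prod.ub_add_nat[of 1 m s "n - m"] mn unfolding R_def Q_def by simp
  then have "eps_gap s n = 1 / (2 ^ (n + 3) * (R * Q * s n))"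
    unfolding eps_gap_def by simp
  also have "\<dots> \<le> 1 / (2 ^ (m + 4) * (R * Q * s n))"
    using R Q sn mn by (intro frac_le mult_right_mono power_increasing) auto
  also have "\<dots> = (1 / (16 * Q * s n)) / (2 ^ m * R)"
    by (simp add: power_add field_simps)
  also have "\<dots> \<le> \<delta> / (\<Prod>x\<leftarrow>p. real x)"
    by (rule tail_scaled)
  also have "\<dots> = engel_value (p @ a # r) (1 / M) - engel_value (p @ b # r') (1 / (real j - 1))"
    unfolding \<delta>_def by (rule engel_value_common_prefix_diff[symmetric])
  also have "\<dots> \<le> x - y"
    using x_lo j(2) by simp
  finally show ?thesis .
qed

end

theorem mainTheorem3:
  fixes s t :: "nat \<Rightarrow> real" and n :: nat and \<sigma>s \<sigma>s' :: "nat list"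
  assumes "\<And>k. k \<ge> 1 \<Longrightarrow> s k > 0 \<and> t k > 0"
    and "\<And>k. k \<ge> 1 \<Longrightarrow> s k \<ge> t k \<and> t k \<ge> 2"
    and "\<And>k. k \<ge> 1 \<Longrightarrow> s (k + 1) \<ge> s k + t k"
    and "n \<ge> 1"
    and "\<sigma>s \<in> D_set s t n" and "\<sigma>s' \<in> D_set s t n" and "\<sigma>s \<noteq> \<sigma>s'"
  shows "J_set s t n \<sigma>s \<inter> J_set s t n \<sigma>s' = {} \<and>
         (\<forall>x\<in>J_set s t n \<sigma>s. \<forall>y\<in>J_set s t n \<sigma>s'. \<bar>x - y\<bar> \<ge> eps_gap s n)"
proof -
  note gap = J_set_gap_of_first_difference[of s t, OF assms(1-3)]
  have "length \<sigma>s = length \<sigma>s'"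
    using D_set_length assms(5,6) by simp
  then obtain p a b r r' where \<sigma>s: "\<sigma>s = p @ a # r" "\<sigma>s' = p @ b # r'" and "a \<noteq> b"
    using list_first_difference assms(7) by blast
  have sep: "\<forall>x\<in>J_set s t n \<sigma>s. \<forall>y\<in>J_set s t n \<sigma>s'. \<bar>x - y\<bar> \<ge> eps_gap s n"
  proof (intro ballI)
    fix x y assume "x \<in> J_set s t n \<sigma>s" "y \<in> J_set s t n \<sigma>s'"
    then show "\<bar>x - y\<bar> \<ge> eps_gap s n"
      using \<open>a \<noteq> b\<close> gap[of p a r n b r' x y] gap[of p b r' n a r y x] assms(5,6)
      unfolding \<sigma>s by (cases "a < b") auto
  qed
  moreover have "0 < eps_gap s n"
  proof -
    have "0 < (\<Prod>k = 1..n. s k)" using assms(1) by (intro prod_pos) auto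
    then show ?thesis unfolding eps_gap_def using assms(1,4) by simp
  qed
  ultimately show ?thesis by fastforce
qed

end
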